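(* Let $R$ be a commutative noetherian ring. The subcategory of finitely weakly Laskerian $R$-modules satisfies the condition $C_{\mathfrak a}$ for every ideal $\mathfrak a$ of $R$.
   Context: An $R$-module $M$ is finitely weakly Laskerian if $\mathrm{Ass}_R(M/K)$ is finite for every finitely generated submodule $K$ of $M$. A subcategory $\mathcal S$ of $R$-modules satisfies the condition $C_{\mathfrak a}$ if for every $R$-module $M$: whenever $\Gamma_{\mathfrak a}(M)=M$ and $(0:_M\mathfrak a)\in\mathcal S$, then $M\in\mathcal S$. *)

theory Defs
  imports "HOL-Algebra.Module" "HOL-Algebra.Ideal_Product" "HOL-Algebra.Ring_Divisibility"
begin

definition ideal_pow :: "('a, 'c) ring_scheme \<Rightarrow> 'a set \<Rightarrow> nat \<Rightarrow> 'a set" where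
  "ideal_pow R I n = I [^]\<^bsub>ideals_set R\<^esub> n"

definition ann_elem :: "('a, 'c) ring_scheme \<Rightarrow> ('a, 'b) module \<Rightarrow> 'b \<Rightarrow> 'a set" where
  "ann_elem R M x = {r \<in> carrier R. r \<odot>\<^bsub>M\<^esub> x = \<zero>\<^bsub>M\<^esub>}"

definition Ass :: "('a, 'c) ring_scheme \<Rightarrow> ('a, 'b) module \<Rightarrow> 'a set set" where
  "Ass R M = {P. primeideal P R \<and> (\<exists>x \<in> carrier M. P = ann_elem R M x)}"

definition gen_submodule :: "('a, 'c) ring_scheme \<Rightarrow> ('a, 'b) module \<Rightarrow> 'b set \<Rightarrow> 'b set" where
  "gen_submodule R M S = \<Inter>{N. submodule N R M \<and> S \<subseteq> N}"

definition fg_submodule :: "('a, 'c) ring_scheme \<Rightarrow> ('a, 'b) module \<Rightarrow> 'b set \<Rightarrow> bool" where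
  "fg_submodule R M K \<longleftrightarrow> (\<exists>S. finite S \<and> S \<subseteq> carrier M \<and> K = gen_submodule R M S)"

text \<open>Quotient module M/K: carrier is the set of cosets K + x, with induced operations.
  (The multiplicative fields of the underlying record are irrelevant for modules.)\<close>
definition quotient_module :: "('a, 'c) ring_scheme \<Rightarrow> ('a, 'b) module \<Rightarrow> 'b set \<Rightarrow> ('a, 'b set) module" where
  "quotient_module R M K =
     \<lparr> carrier = a_rcosets\<^bsub>M\<^esub> K, monoid.mult = (\<lambda>A B. undefined), one = undefined,
       zero = K, add = set_add M,
       smult = (\<lambda>r C. K <+>\<^bsub>M\<^esub> ((\<lambda>x. r \<odot>\<^bsub>M\<^esub> x) ` C)) \<rparr>"

definition fin_weakly_laskerian :: "('a, 'c) ring_scheme \<Rightarrow> ('a, 'b) module \<Rightarrow> bool" where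
  "fin_weakly_laskerian R M \<longleftrightarrow>
     (\<forall>K. fg_submodule R M K \<longrightarrow> finite (Ass R (quotient_module R M K)))"

definition torsion :: "('a, 'c) ring_scheme \<Rightarrow> ('a, 'b) module \<Rightarrow> 'a set \<Rightarrow> 'b set" where
  "torsion R M I = {x \<in> carrier M. \<exists>n::nat. \<forall>r \<in> ideal_pow R I n. r \<odot>\<^bsub>M\<^esub> x = \<zero>\<^bsub>M\<^esub>}"

definition ann_submodule :: "('a, 'c) ring_scheme \<Rightarrow> ('a, 'b) module \<Rightarrow> 'a set \<Rightarrow> 'b set" where
  "ann_submodule R M I = {x \<in> carrier M. \<forall>r \<in> I. r \<odot>\<^bsub>M\<^esub> x = \<zero>\<^bsub>M\<^esub>}"

definition condition_C :: "('a, 'c) ring_scheme \<Rightarrow> 'a set \<Rightarrow> (('a, 'b) module \<Rightarrow> bool) \<Rightarrow> bool" where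
  "condition_C R I S \<longleftrightarrow>
     (\<forall>M. module R M \<longrightarrow> torsion R M I = carrier M \<longrightarrow>
          S (M\<lparr>carrier := ann_submodule R M I\<rparr>) \<longrightarrow> S M)"

end

(* Since M is a-torsion, every associated prime of M/K contains a, so Ass(M/K) = Ass(L/K) for
   L = (K :_M a); and Ass(L/K) is contained in Ass((K + N)/K) \<union> Ass(L/(K + N)), N = (0 :_M a).
   The first set is Ass(N/(K \<inter> N)), finite because N is finitely weakly Laskerian and K \<inter> N,
   a submodule of the finitely generated K, is finitely generated.  For the second, write
   a = (a_1, ..., a_n): the map y \<mapsto> (a_1 y, ..., a_n y) embeds L/N into K^n, so L/(K + N) is
   finitely generated, and a finitely generated module over a noetherian ring has only finitely
   many associated primes (by induction on the generators, reducing to Ass(R/J), which is finite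
   by noetherian induction on J). *)

theory Submission
  imports Defs
begin

definition ideal_colon :: "('a, 'c) ring_scheme \<Rightarrow> 'a set \<Rightarrow> 'a \<Rightarrow> 'a set" where
  "ideal_colon R J c = {r \<in> carrier R. r \<otimes>\<^bsub>R\<^esub> c \<in> J}"

definition ring_Ass :: "('a, 'c) ring_scheme \<Rightarrow> 'a set \<Rightarrow> 'a set set" where
  "ring_Ass R J = {P. primeideal P R \<and> (\<exists>c \<in> carrier R. P = ideal_colon R J c)}"

definition ann_modulo :: "('a, 'c) ring_scheme \<Rightarrow> ('a, 'b, 'd) module_scheme \<Rightarrow> 'b set \<Rightarrow> 'b \<Rightarrow> 'a set" where
  "ann_modulo R M U x = {r \<in> carrier R. r \<odot>\<^bsub>M\<^esub> x \<in> U}"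

definition submodule_colon :: "('a, 'c) ring_scheme \<Rightarrow> ('a, 'b, 'd) module_scheme \<Rightarrow> 'b set \<Rightarrow> 'a set \<Rightarrow> 'b set" where
  "submodule_colon R M K A = {x \<in> carrier M. \<forall>a \<in> A. a \<odot>\<^bsub>M\<^esub> x \<in> K}"

definition subquot_Ass :: "('a, 'c) ring_scheme \<Rightarrow> ('a, 'b, 'd) module_scheme \<Rightarrow> 'b set \<Rightarrow> 'b set \<Rightarrow> 'a set set" where
  "subquot_Ass R M U W = {P. primeideal P R \<and> (\<exists>x \<in> W. P = ann_modulo R M U x)}"

text \<open>In the usual notation: \<^term>\<open>ideal_colon R J c\<close> is the ideal \<open>(J : c)\<close> and
  \<^term>\<open>ring_Ass R J\<close> is \<open>Ass(R/J)\<close>; \<^term>\<open>ann_modulo R M U x\<close> is \<open>(U :\<^sub>R x)\<close>,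
  \<^term>\<open>submodule_colon R M K A\<close> is \<open>(K :\<^sub>M A)\<close>, and for submodules \<open>U \<subseteq> W\<close>
  \<^term>\<open>subquot_Ass R M U W\<close> is \<open>Ass(W/U)\<close>.\<close>

section \<open>Associated primes of cyclic modules\<close>

lemma (in noetherian_ring) ideal_induct [consumes 1, case_names ideal]:
  assumes "ideal J R"
    and step: "\<And>J. ideal J R \<Longrightarrow> (\<And>J'. ideal J' R \<Longrightarrow> J \<subset> J' \<Longrightarrow> P J') \<Longrightarrow> P J"
  shows "P J"
proof (rule ccontr)
  let ?\<A> = "{J. ideal J R \<and> \<not> P J}"
  assume "\<not> P J"
  with assms(1) have "?\<A> \<noteq> {}" by blast
  moreover have "\<Union>\<C> \<in> ?\<A>" if "\<C> \<noteq> {}" "subset.chain ?\<A> \<C>" for \<C>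
  proof -
    have "subset.chain {I. ideal I R} \<C>"
      using that(2) unfolding subset_chain_def by blast
    then have "\<Union>\<C> \<in> \<C>" using ideal_chain_is_trivial[OF that(1)] by blast
    with that(2) show ?thesis unfolding subset_chain_def by blast
  qed
  ultimately obtain J0 where J0: "J0 \<in> ?\<A>" and max: "\<And>X. X \<in> ?\<A> \<Longrightarrow> J0 \<subseteq> X \<Longrightarrow> X = J0"
    using subset_Zorn_nonempty[of ?\<A>] by blast
  have "P J0"
  proof (rule step)
    show "ideal J0 R" using J0 by blast
    show "P J'" if "ideal J' R" "J0 \<subset> J'" for J'
      using that max[of J'] by blast
  qed
  with J0 show False by blast
qed

context cring
begin

lemma ideal_colon_ideal:
  assumes J: "ideal J R" and c: "c \<in> carrier R"
  shows "ideal (ideal_colon R J c) R"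
proof -
  interpret J: ideal J R by fact
  show ?thesis
  proof (rule idealI)
    show "subgroup (ideal_colon R J c) (add_monoid R)"
    proof
      show "x \<otimes>\<^bsub>add_monoid R\<^esub> y \<in> ideal_colon R J c"
        if "x \<in> ideal_colon R J c" "y \<in> ideal_colon R J c" for x y
        using that c by (simp add: ideal_colon_def l_distr)
      show "inv\<^bsub>add_monoid R\<^esub> x \<in> ideal_colon R J c" if "x \<in> ideal_colon R J c" for x
        using that c by (simp add: ideal_colon_def a_inv_def[symmetric] l_minus)
    qed (use c in \<open>auto simp: ideal_colon_def\<close>)
    show "x \<otimes> a \<in> ideal_colon R J c" if "a \<in> ideal_colon R J c" "x \<in> carrier R" for a x
      using that c by (simp add: ideal_colon_def m_assoc J.I_l_closed)
    then show "a \<otimes> x \<in> ideal_colon R J c" if "a \<in> ideal_colon R J c" "x \<in> carrier R" for a x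
      using that by (metis (no_types, lifting) ideal_colon_def m_comm mem_Collect_eq)
  qed (rule ring_axioms)
qed

lemma ideal_colon_add_left:
  assumes J: "ideal J R" and j: "j \<in> J" and y: "y \<in> carrier R"
  shows "ideal_colon R J (j \<oplus> y) = ideal_colon R J y"
proof -
  interpret J: ideal J R by fact
  have "r \<otimes> (j \<oplus> y) \<in> J \<longleftrightarrow> r \<otimes> y \<in> J" if r: "r \<in> carrier R" for r
  proof -
    have rj: "r \<otimes> j \<in> J" using J.I_l_closed[OF j r] .
    have "r \<otimes> (j \<oplus> y) = r \<otimes> j \<oplus> r \<otimes> y"
      using r j y by (simp add: r_distr)
    moreover have "r \<otimes> y = \<ominus> (r \<otimes> j) \<oplus> (r \<otimes> j \<oplus> r \<otimes> y)"
      using r J.Icarr[OF j] y by (simp add: a_assoc[symmetric] l_neg)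
    ultimately show ?thesis
      using rj by (metis J.a_closed J.a_inv_closed)
  qed
  then show ?thesis by (auto simp: ideal_colon_def)
qed

lemma ideal_colon_mult:
  assumes "d \<in> carrier R" "a \<in> carrier R"
  shows "ideal_colon R J (d \<otimes> a) = ideal_colon R (ideal_colon R J a) d"
  using assms by (auto simp: ideal_colon_def m_assoc)

lemma ideal_colon_primeideal:
  assumes P: "primeideal P R" and t: "t \<in> carrier R" "t \<notin> P"
  shows "ideal_colon R P t = P"
proof -
  interpret P: primeideal P R by fact
  show ?thesis using t P.I_prime P.I_r_closed P.Icarr by (auto simp: ideal_colon_def)
qed

lemma ring_Ass_carrier: "ring_Ass R (carrier R) = {}"
  using primeideal.I_notcarr by (fastforce simp: ring_Ass_def ideal_colon_def)

lemma ring_Ass_primeideal: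
  assumes P: "primeideal P R"
  shows "ring_Ass R P \<subseteq> {P}"
proof
  interpret P: primeideal P R by fact
  fix Q assume "Q \<in> ring_Ass R P"
  then obtain c where Q: "primeideal Q R" "c \<in> carrier R" "Q = ideal_colon R P c"
    unfolding ring_Ass_def by blast
  have "c \<notin> P"
  proof
    assume "c \<in> P"
    then have "Q = carrier R" using Q(2,3) P.I_l_closed by (auto simp: ideal_colon_def)
    with primeideal.I_notcarr[OF Q(1)] show False by simp
  qed
  then show "Q \<in> {P}" using ideal_colon_primeideal[OF P Q(2)] Q(3) by simp
qed

lemma insert_subset_set_add_cgenideal:
  assumes J: "ideal J R" and a: "a \<in> carrier R"
  shows "insert a J \<subseteq> J <+>\<^bsub>R\<^esub> PIdl a"
proof -
  have "J \<union> PIdl a \<subseteq> carrier R"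
    using ideal.Icarr[OF J] ideal.Icarr[OF cgenideal_ideal[OF a]] by blast
  then have "J \<union> PIdl a \<subseteq> J <+>\<^bsub>R\<^esub> PIdl a"
    using genideal_self union_genideal[OF J cgenideal_ideal[OF a]] by metis
  then show ?thesis using cgenideal_self[OF a] by blast
qed

lemma ring_Ass_split:
  assumes J: "ideal J R" and a: "a \<in> carrier R"
  shows "ring_Ass R J \<subseteq> ring_Ass R (J <+>\<^bsub>R\<^esub> PIdl a) \<union> ring_Ass R (ideal_colon R J a)"
proof
  fix P assume "P \<in> ring_Ass R J"
  then obtain c where P: "primeideal P R" "P = ideal_colon R J c" and c: "c \<in> carrier R"
    unfolding ring_Ass_def by blast
  show "P \<in> ring_Ass R (J <+>\<^bsub>R\<^esub> PIdl a) \<union> ring_Ass R (ideal_colon R J a)"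
  proof (cases "\<exists>t \<in> carrier R. t \<notin> P \<and> t \<otimes> c \<in> J <+>\<^bsub>R\<^esub> PIdl a")
    case True
    then obtain t j d where t: "t \<in> carrier R" "t \<notin> P"
      and jd: "j \<in> J" "d \<in> carrier R" "t \<otimes> c = j \<oplus> d \<otimes> a"
      unfolding set_add_def' cgenideal_def by blast
    have "P = ideal_colon R J (t \<otimes> c)"
      using ideal_colon_primeideal[OF P(1) t] ideal_colon_mult[OF t(1) c] P(2) by simp
    also have "\<dots> = ideal_colon R (ideal_colon R J a) d"
      using ideal_colon_add_left[OF J jd(1)] ideal_colon_mult[OF jd(2) a] jd(2,3) a by simp
    finally show ?thesis using P(1) jd(2) unfolding ring_Ass_def by blast
  next
    case False
    have "J \<subseteq> J <+>\<^bsub>R\<^esub> PIdl a"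
      using insert_subset_set_add_cgenideal[OF J a] by blast
    then have "P = ideal_colon R (J <+>\<^bsub>R\<^esub> PIdl a) c"
      using P(2) False by (auto simp: ideal_colon_def)
    then show ?thesis using P(1) c unfolding ring_Ass_def by blast
  qed
qed

lemma finite_ring_Ass:
  assumes "noetherian_ring R" and "ideal J R"
  shows "finite (ring_Ass R J)"
proof -
  interpret noetherian_ring R by fact
  from assms(2) show ?thesis
  proof (induction rule: ideal_induct)
    case (ideal J)
    consider "J = carrier R" | "primeideal J R"
      | a b where "a \<in> carrier R" "b \<in> carrier R" "a \<otimes> b \<in> J" "a \<notin> J" "b \<notin> J"
      using primeidealI[OF ideal.hyps is_cring] by blast
    then show ?case
    proof cases
      case 1
      then show ?thesis by (simp add: ring_Ass_carrier)
    next
      case 2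
      then show ?thesis using ring_Ass_primeideal by (meson finite.emptyI finite_insert finite_subset)
    next
      case (3 a b)
      let ?J1 = "J <+>\<^bsub>R\<^esub> PIdl a" and ?J2 = "ideal_colon R J a"
      have J1: "ideal ?J1 R" using add_ideals[OF ideal.hyps cgenideal_ideal[OF 3(1)]] .
      have J2: "ideal ?J2 R" using ideal_colon_ideal[OF ideal.hyps 3(1)] .
      have "J \<subset> ?J1" using insert_subset_set_add_cgenideal[OF ideal.hyps 3(1)] 3(4) by blast
      moreover have "J \<subset> ?J2"
      proof -
        have "J \<subseteq> ?J2"
          using ideal.I_r_closed[OF ideal.hyps _ 3(1)] ideal.Icarr[OF ideal.hyps]
          unfolding ideal_colon_def by blast
        moreover have "b \<in> ?J2" using 3 m_comm by (simp add: ideal_colon_def)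
        ultimately show ?thesis using 3(5) by blast
      qed
      ultimately have "finite (ring_Ass R ?J1)" "finite (ring_Ass R ?J2)"
        using ideal.IH J1 J2 by auto
      then show ?thesis
        using ring_Ass_split[OF ideal.hyps 3(1)] by (meson finite_UnI finite_subset)
    qed
  qed
qed

end

section \<open>Submodules and their associated primes\<close>

lemma set_addE:
  assumes "x \<in> A <+>\<^bsub>G\<^esub> B"
  obtains a b where "a \<in> A" "b \<in> B" "x = a \<oplus>\<^bsub>G\<^esub> b"
  using assms unfolding set_add_def' by blast

context module
begin

lemma submodule_zero_closed: "submodule H R M \<Longrightarrow> \<zero>\<^bsub>M\<^esub> \<in> H"
  using subgroup.one_closed[OF submodule.axioms(1)] by simp

lemma submodule_a_closed: "submodule H R M \<Longrightarrow> a \<in> H \<Longrightarrow> b \<in> H \<Longrightarrow> a \<oplus>\<^bsub>M\<^esub> b \<in> H"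
  by (rule submoduleE(5))

lemma submodule_a_inv_closed: "submodule H R M \<Longrightarrow> a \<in> H \<Longrightarrow> \<ominus>\<^bsub>M\<^esub> a \<in> H"
  by (rule submoduleE(3))

lemma submodule_minus_closed: "submodule H R M \<Longrightarrow> a \<in> H \<Longrightarrow> b \<in> H \<Longrightarrow> a \<ominus>\<^bsub>M\<^esub> b \<in> H"
  unfolding a_minus_def by (intro submodule_a_closed submodule_a_inv_closed)

lemma submoduleI_linear:
  assumes "H \<subseteq> carrier M" "\<zero>\<^bsub>M\<^esub> \<in> H"
    and add: "\<And>a b. a \<in> H \<Longrightarrow> b \<in> H \<Longrightarrow> a \<oplus>\<^bsub>M\<^esub> b \<in> H"
    and smult: "\<And>r a. r \<in> carrier R \<Longrightarrow> a \<in> H \<Longrightarrow> r \<odot>\<^bsub>M\<^esub> a \<in> H"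
  shows "submodule H R M"
proof (rule submoduleI)
  show "\<ominus>\<^bsub>M\<^esub> a \<in> H" if "a \<in> H" for a
  proof -
    have "\<ominus>\<^bsub>M\<^esub> a = (\<ominus> \<one>) \<odot>\<^bsub>M\<^esub> a"
      using that assms(1) by (auto simp: smult_l_minus)
    then show ?thesis using smult[OF _ that] by simp
  qed
qed (use assms in auto)

lemma submodule_zero: "submodule {\<zero>\<^bsub>M\<^esub>} R M"
  by (rule submoduleI_linear) auto

lemma submodule_Int:
  "submodule U R M \<Longrightarrow> submodule V R M \<Longrightarrow> submodule (U \<inter> V) R M"
  by (intro submoduleI_linear)
    (auto simp: submodule_zero_closed submodule_a_closed submodule.smult_closed dest: submoduleE(1))

lemma submodule_set_add:
  assumes U: "submodule U R M" and V: "submodule V R M"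
  shows "submodule (U <+>\<^bsub>M\<^esub> V) R M"
proof (rule submodule.intro)
  show "subgroup (U <+>\<^bsub>M\<^esub> V) (add_monoid M)"
    using add_additive_subgroups[of U V] submodule.axioms(1)[OF U] submodule.axioms(1)[OF V]
    by (simp add: additive_subgroup_def)
  show "submodule_axioms (U <+>\<^bsub>M\<^esub> V) R M"
  proof
    fix r x assume r: "r \<in> carrier R" and "x \<in> U <+>\<^bsub>M\<^esub> V"
    then obtain u v where uv: "u \<in> U" "v \<in> V" "x = u \<oplus>\<^bsub>M\<^esub> v"
      unfolding set_add_def' by blast
    then have "r \<odot>\<^bsub>M\<^esub> x = r \<odot>\<^bsub>M\<^esub> u \<oplus>\<^bsub>M\<^esub> r \<odot>\<^bsub>M\<^esub> v"
      using r submoduleE(1)[OF U] submoduleE(1)[OF V] by (simp add: smult_r_distr subsetD)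
    then show "r \<odot>\<^bsub>M\<^esub> x \<in> U <+>\<^bsub>M\<^esub> V"
      using submodule.smult_closed[OF U r uv(1)] submodule.smult_closed[OF V r uv(2)]
      unfolding set_add_def' by blast
  qed
qed

lemma set_add_subset_left:
  assumes "U \<subseteq> carrier M" "submodule V R M"
  shows "U \<subseteq> U <+>\<^bsub>M\<^esub> V"
proof
  fix u assume "u \<in> U"
  then have "u = u \<oplus>\<^bsub>M\<^esub> \<zero>\<^bsub>M\<^esub>" using assms(1) by auto
  then show "u \<in> U <+>\<^bsub>M\<^esub> V"
    using \<open>u \<in> U\<close> submodule_zero_closed[OF assms(2)] unfolding set_add_def' by blast
qed

lemma set_add_subset_right:
  assumes "submodule U R M" "V \<subseteq> carrier M"
  shows "V \<subseteq> U <+>\<^bsub>M\<^esub> V"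
proof
  fix v assume "v \<in> V"
  then have "v = \<zero>\<^bsub>M\<^esub> \<oplus>\<^bsub>M\<^esub> v" using assms(2) by auto
  then show "v \<in> U <+>\<^bsub>M\<^esub> V"
    using \<open>v \<in> V\<close> submodule_zero_closed[OF assms(1)] unfolding set_add_def' by blast
qed

lemma submodule_image_smult:
  assumes a: "a \<in> carrier R" and Y: "submodule Y R M"
  shows "submodule ((\<lambda>y. a \<odot>\<^bsub>M\<^esub> y) ` Y) R M"
proof (rule submoduleI_linear)
  have Y_carr: "Y \<subseteq> carrier M" using submoduleE(1)[OF Y] .
  show "(\<lambda>y. a \<odot>\<^bsub>M\<^esub> y) ` Y \<subseteq> carrier M" using Y_carr a by auto
  show "\<zero>\<^bsub>M\<^esub> \<in> (\<lambda>y. a \<odot>\<^bsub>M\<^esub> y) ` Y"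
    using a submodule_zero_closed[OF Y] smult_r_null[OF a] by (metis image_eqI)
  show "b \<oplus>\<^bsub>M\<^esub> d \<in> (\<lambda>y. a \<odot>\<^bsub>M\<^esub> y) ` Y"
    if bd: "b \<in> (\<lambda>y. a \<odot>\<^bsub>M\<^esub> y) ` Y" "d \<in> (\<lambda>y. a \<odot>\<^bsub>M\<^esub> y) ` Y" for b d
  proof -
    obtain y y' where "y \<in> Y" "y' \<in> Y" "b = a \<odot>\<^bsub>M\<^esub> y" "d = a \<odot>\<^bsub>M\<^esub> y'"
      using bd by blast
    moreover from this have "b \<oplus>\<^bsub>M\<^esub> d = a \<odot>\<^bsub>M\<^esub> (y \<oplus>\<^bsub>M\<^esub> y')"
      using Y_carr a by (simp add: smult_r_distr subsetD)
    ultimately show ?thesis using submodule_a_closed[OF Y] by blast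
  qed
  show "r \<odot>\<^bsub>M\<^esub> b \<in> (\<lambda>y. a \<odot>\<^bsub>M\<^esub> y) ` Y" if r: "r \<in> carrier R" and b: "b \<in> (\<lambda>y. a \<odot>\<^bsub>M\<^esub> y) ` Y" for r b
  proof -
    obtain y where "y \<in> Y" "b = a \<odot>\<^bsub>M\<^esub> y" using b by blast
    moreover from this have "r \<odot>\<^bsub>M\<^esub> b = a \<odot>\<^bsub>M\<^esub> (r \<odot>\<^bsub>M\<^esub> y)"
      using Y_carr a r by (simp add: smult_assoc1[symmetric] R.m_comm subsetD)
    ultimately show ?thesis using submodule.smult_closed[OF Y r] by blast
  qed
qed

lemma submodule_cyclic:
  assumes s: "s \<in> carrier M"
  shows "submodule ((\<lambda>c. c \<odot>\<^bsub>M\<^esub> s) ` carrier R) R M"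
proof (rule submoduleI_linear)
  show "\<zero>\<^bsub>M\<^esub> \<in> (\<lambda>c. c \<odot>\<^bsub>M\<^esub> s) ` carrier R"
    using smult_l_null[OF s] R.zero_closed by (metis image_eqI)
  show "b \<oplus>\<^bsub>M\<^esub> d \<in> (\<lambda>c. c \<odot>\<^bsub>M\<^esub> s) ` carrier R"
    if "b \<in> (\<lambda>c. c \<odot>\<^bsub>M\<^esub> s) ` carrier R" "d \<in> (\<lambda>c. c \<odot>\<^bsub>M\<^esub> s) ` carrier R" for b d
    using that s by (auto simp: smult_l_distr[symmetric])
  show "r \<odot>\<^bsub>M\<^esub> b \<in> (\<lambda>c. c \<odot>\<^bsub>M\<^esub> s) ` carrier R"
    if "r \<in> carrier R" "b \<in> (\<lambda>c. c \<odot>\<^bsub>M\<^esub> s) ` carrier R" for r b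
    using that s by (auto simp: smult_assoc1[symmetric])
qed (use s in auto)

lemma submodule_submodule_colon:
  assumes K: "submodule K R M" and A: "A \<subseteq> carrier R"
  shows "submodule (submodule_colon R M K A) R M"
proof (rule submoduleI_linear)
  show "\<zero>\<^bsub>M\<^esub> \<in> submodule_colon R M K A"
    using A submodule_zero_closed[OF K] by (auto simp: submodule_colon_def)
  show "x \<oplus>\<^bsub>M\<^esub> y \<in> submodule_colon R M K A"
    if "x \<in> submodule_colon R M K A" "y \<in> submodule_colon R M K A" for x y
    using that A submodule_a_closed[OF K] by (auto simp: submodule_colon_def smult_r_distr)
  show "r \<odot>\<^bsub>M\<^esub> x \<in> submodule_colon R M K A" if r: "r \<in> carrier R" and x: "x \<in> submodule_colon R M K A" for r x
  proof -
    have "a \<odot>\<^bsub>M\<^esub> (r \<odot>\<^bsub>M\<^esub> x) = r \<odot>\<^bsub>M\<^esub> (a \<odot>\<^bsub>M\<^esub> x)" if "a \<in> A" for a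
      using that A r x by (simp add: submodule_colon_def smult_assoc1[symmetric] R.m_comm subset_iff)
    then show ?thesis using r x submodule.smult_closed[OF K r] by (simp add: submodule_colon_def)
  qed
qed (auto simp: submodule_colon_def)

lemma ann_modulo_ideal:
  assumes U: "submodule U R M" and x: "x \<in> carrier M"
  shows "ideal (ann_modulo R M U x) R"
proof (rule idealI)
  show "subgroup (ann_modulo R M U x) (add_monoid R)"
  proof
    show "a \<otimes>\<^bsub>add_monoid R\<^esub> b \<in> ann_modulo R M U x"
      if "a \<in> ann_modulo R M U x" "b \<in> ann_modulo R M U x" for a b
      using that x submodule_a_closed[OF U] by (simp add: ann_modulo_def smult_l_distr)
    show "inv\<^bsub>add_monoid R\<^esub> a \<in> ann_modulo R M U x" if "a \<in> ann_modulo R M U x" for a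
      using that x submodule_a_inv_closed[OF U]
      by (simp add: ann_modulo_def a_inv_def[symmetric] smult_l_minus)
  qed (use x submodule_zero_closed[OF U] in \<open>auto simp: ann_modulo_def\<close>)
  show "r \<otimes> a \<in> ann_modulo R M U x" if "a \<in> ann_modulo R M U x" "r \<in> carrier R" for a r
    using that x submodule.smult_closed[OF U] by (simp add: ann_modulo_def smult_assoc1)
  then show "a \<otimes> r \<in> ann_modulo R M U x" if "a \<in> ann_modulo R M U x" "r \<in> carrier R" for a r
    using that by (metis (no_types, lifting) ann_modulo_def R.m_comm mem_Collect_eq)
qed (rule R.ring_axioms)

lemma submodule_colon_zero_genideal:
  assumes A: "A \<subseteq> carrier R"
  shows "submodule_colon R M {\<zero>\<^bsub>M\<^esub>} (Idl\<^bsub>R\<^esub> A) = submodule_colon R M {\<zero>\<^bsub>M\<^esub>} A"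
proof
  show "submodule_colon R M {\<zero>\<^bsub>M\<^esub>} (Idl\<^bsub>R\<^esub> A) \<subseteq> submodule_colon R M {\<zero>\<^bsub>M\<^esub>} A"
    using R.genideal_self[OF A] by (auto simp: submodule_colon_def)
  show "submodule_colon R M {\<zero>\<^bsub>M\<^esub>} A \<subseteq> submodule_colon R M {\<zero>\<^bsub>M\<^esub>} (Idl\<^bsub>R\<^esub> A)"
  proof
    fix x assume x: "x \<in> submodule_colon R M {\<zero>\<^bsub>M\<^esub>} A"
    then have "A \<subseteq> ann_modulo R M {\<zero>\<^bsub>M\<^esub>} x" using A by (auto simp: submodule_colon_def ann_modulo_def)
    then have "Idl\<^bsub>R\<^esub> A \<subseteq> ann_modulo R M {\<zero>\<^bsub>M\<^esub>} x"
      using x R.genideal_minimal[OF ann_modulo_ideal[OF submodule_zero]] by (simp add: submodule_colon_def)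
    then show "x \<in> submodule_colon R M {\<zero>\<^bsub>M\<^esub>} (Idl\<^bsub>R\<^esub> A)"
      using x by (auto simp: submodule_colon_def ann_modulo_def)
  qed
qed

lemma submodule_abelian_subgroup:
  assumes "submodule K R M"
  shows "abelian_subgroup K M"
  using abelian_subgroupI3[OF additive_subgroup.intro[OF submodule.axioms(1)[OF assms]]]
    M.abelian_group_axioms .

lemma coset_eq_submodule_iff:
  assumes K: "submodule K R M" and y: "y \<in> carrier M"
  shows "K +>\<^bsub>M\<^esub> y = K \<longleftrightarrow> y \<in> K"
  using abelian_subgroup.a_rcos_const[OF submodule_abelian_subgroup[OF K]]
    abelian_subgroup.a_rcos_self[OF submodule_abelian_subgroup[OF K] y] by auto

lemma ann_modulo_add_left:
  assumes U: "submodule U R M" and u: "u \<in> U" and x: "x \<in> carrier M"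
  shows "ann_modulo R M U (u \<oplus>\<^bsub>M\<^esub> x) = ann_modulo R M U x"
proof -
  have u_carr: "u \<in> carrier M" using u submoduleE(1)[OF U] by blast
  have "r \<odot>\<^bsub>M\<^esub> (u \<oplus>\<^bsub>M\<^esub> x) \<in> U \<longleftrightarrow> r \<odot>\<^bsub>M\<^esub> x \<in> U" if r: "r \<in> carrier R" for r
  proof -
    have ru: "r \<odot>\<^bsub>M\<^esub> u \<in> U" using submodule.smult_closed[OF U r u] .
    have "r \<odot>\<^bsub>M\<^esub> (u \<oplus>\<^bsub>M\<^esub> x) = r \<odot>\<^bsub>M\<^esub> u \<oplus>\<^bsub>M\<^esub> r \<odot>\<^bsub>M\<^esub> x"
      using r u_carr x by (simp add: smult_r_distr)
    moreover have "r \<odot>\<^bsub>M\<^esub> x = \<ominus>\<^bsub>M\<^esub> (r \<odot>\<^bsub>M\<^esub> u) \<oplus>\<^bsub>M\<^esub> (r \<odot>\<^bsub>M\<^esub> u \<oplus>\<^bsub>M\<^esub> r \<odot>\<^bsub>M\<^esub> x)"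
      using r u_carr x by (simp add: M.r_neg1)
    ultimately show ?thesis
      using ru submodule_a_closed[OF U] submodule_a_inv_closed[OF U] by metis
  qed
  then show ?thesis by (auto simp: ann_modulo_def)
qed

lemma ann_modulo_smult:
  "c \<in> carrier R \<Longrightarrow> s \<in> carrier M \<Longrightarrow>
    ann_modulo R M U (c \<odot>\<^bsub>M\<^esub> s) = ideal_colon R (ann_modulo R M U s) c"
  by (auto simp: ann_modulo_def ideal_colon_def smult_assoc1)

lemma subquot_Ass_mono: "W \<subseteq> W' \<Longrightarrow> subquot_Ass R M U W \<subseteq> subquot_Ass R M U W'"
  unfolding subquot_Ass_def by blast

lemma subquot_Ass_self: "submodule U R M \<Longrightarrow> subquot_Ass R M U U = {}"
  using primeideal.I_notcarr submodule.smult_closed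
  by (fastforce simp: subquot_Ass_def ann_modulo_def)

lemma subquot_Ass_subset_Un:
  assumes U: "submodule U R M" and V: "submodule V R M" and "U \<subseteq> V" and W: "W \<subseteq> carrier M"
  shows "subquot_Ass R M U W \<subseteq> subquot_Ass R M U V \<union> subquot_Ass R M V W"
proof
  fix P assume "P \<in> subquot_Ass R M U W"
  then obtain x where P: "primeideal P R" "P = ann_modulo R M U x" and x: "x \<in> W"
    unfolding subquot_Ass_def by blast
  show "P \<in> subquot_Ass R M U V \<union> subquot_Ass R M V W"
  proof (cases "\<exists>t \<in> carrier R. t \<notin> P \<and> t \<odot>\<^bsub>M\<^esub> x \<in> V")
    case True
    then obtain t where t: "t \<in> carrier R" "t \<notin> P" and tx: "t \<odot>\<^bsub>M\<^esub> x \<in> V" by blast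
    have "P = ann_modulo R M U (t \<odot>\<^bsub>M\<^esub> x)"
      using ideal_colon_primeideal[OF P(1) t] ann_modulo_smult[OF t(1) subsetD[OF W x]] P(2) by simp
    then show ?thesis using P(1) tx unfolding subquot_Ass_def by blast
  next
    case False
    then have "P = ann_modulo R M V x"
      using P(2) \<open>U \<subseteq> V\<close> by (auto simp: ann_modulo_def)
    then show ?thesis using P(1) x unfolding subquot_Ass_def by blast
  qed
qed

lemma subquot_Ass_cyclic:
  assumes W: "submodule W R M" and s: "s \<in> carrier M"
  shows "subquot_Ass R M W (W <+>\<^bsub>M\<^esub> (\<lambda>c. c \<odot>\<^bsub>M\<^esub> s) ` carrier R) \<subseteq> ring_Ass R (ann_modulo R M W s)"
proof
  fix P assume "P \<in> subquot_Ass R M W (W <+>\<^bsub>M\<^esub> (\<lambda>c. c \<odot>\<^bsub>M\<^esub> s) ` carrier R)"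
  then obtain w c where P: "primeideal P R" "P = ann_modulo R M W (w \<oplus>\<^bsub>M\<^esub> c \<odot>\<^bsub>M\<^esub> s)"
    and w: "w \<in> W" and c: "c \<in> carrier R"
    unfolding subquot_Ass_def set_add_def' by blast
  have "P = ideal_colon R (ann_modulo R M W s) c"
    using P(2) ann_modulo_add_left[OF W w] ann_modulo_smult[OF c s] c s by simp
  then show "P \<in> ring_Ass R (ann_modulo R M W s)"
    using P(1) c unfolding ring_Ass_def by blast
qed

lemma subquot_Ass_set_add:
  assumes K: "submodule K R M" and N: "N \<subseteq> carrier M"
  shows "subquot_Ass R M K (K <+>\<^bsub>M\<^esub> N) \<subseteq> subquot_Ass R M K N"
proof
  fix P assume "P \<in> subquot_Ass R M K (K <+>\<^bsub>M\<^esub> N)"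
  then obtain k n where P: "primeideal P R" "P = ann_modulo R M K (k \<oplus>\<^bsub>M\<^esub> n)"
    and k: "k \<in> K" and n: "n \<in> N"
    unfolding subquot_Ass_def set_add_def' by blast
  then have "P = ann_modulo R M K n"
    using ann_modulo_add_left[OF K k] N by blast
  then show "P \<in> subquot_Ass R M K N" using P(1) n unfolding subquot_Ass_def by blast
qed

end

section \<open>Finitely generated modules over a noetherian ring\<close>

text \<open>The notions of theory Defs are stated for module records without further
  fields, while the locale \<^locale>\<open>module\<close> admits an arbitrary record scheme.\<close>

locale module_record = module R M for R :: "('a, 'c) ring_scheme" and M :: "('a, 'b) module"

context module_record
begin

lemma submodule_gen_submodule: "S \<subseteq> carrier M \<Longrightarrow> submodule (gen_submodule R M S) R M"
proof (rule submoduleI_linear)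
  assume S: "S \<subseteq> carrier M"
  then show "gen_submodule R M S \<subseteq> carrier M"
    unfolding gen_submodule_def using carrier_is_submodule by blast
  show "\<zero>\<^bsub>M\<^esub> \<in> gen_submodule R M S"
    unfolding gen_submodule_def using submodule_zero_closed by blast
  show "a \<oplus>\<^bsub>M\<^esub> b \<in> gen_submodule R M S"
    if "a \<in> gen_submodule R M S" "b \<in> gen_submodule R M S" for a b
    using that by (simp add: gen_submodule_def submodule_a_closed)
  show "r \<odot>\<^bsub>M\<^esub> a \<in> gen_submodule R M S" if "r \<in> carrier R" "a \<in> gen_submodule R M S" for r a
    using that by (auto simp: gen_submodule_def intro: submodule.smult_closed)
qed

lemma gen_submodule_minimal: "submodule N R M \<Longrightarrow> S \<subseteq> N \<Longrightarrow> gen_submodule R M S \<subseteq> N"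
  unfolding gen_submodule_def by blast

lemma gen_submodule_incl: "S \<subseteq> gen_submodule R M S"
  unfolding gen_submodule_def by blast

lemma gen_submodule_mono: "T \<subseteq> S \<Longrightarrow> gen_submodule R M T \<subseteq> gen_submodule R M S"
  unfolding gen_submodule_def by blast

lemma gen_submodule_idem: "submodule N R M \<Longrightarrow> gen_submodule R M N = N"
  using gen_submodule_minimal[of N N] gen_submodule_incl[of N] by blast

lemma set_add_subset_gen_submodule_Un:
  assumes "A \<subseteq> carrier M" "B \<subseteq> carrier M"
  shows "A <+>\<^bsub>M\<^esub> gen_submodule R M B \<subseteq> gen_submodule R M (A \<union> B)"
proof
  fix x assume "x \<in> A <+>\<^bsub>M\<^esub> gen_submodule R M B"
  then obtain a b where "a \<in> A" "b \<in> gen_submodule R M B" "x = a \<oplus>\<^bsub>M\<^esub> b"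
    by (rule set_addE)
  moreover have "A \<subseteq> gen_submodule R M (A \<union> B)" "gen_submodule R M B \<subseteq> gen_submodule R M (A \<union> B)"
    using gen_submodule_incl[of "A \<union> B"] gen_submodule_mono[of B "A \<union> B"] by blast+
  ultimately show "x \<in> gen_submodule R M (A \<union> B)"
    using submodule_a_closed[OF submodule_gen_submodule] assms by blast
qed

lemma set_add_gen_submodule_trans:
  assumes Y: "Y \<subseteq> Y' <+>\<^bsub>M\<^esub> gen_submodule R M X1" and Y': "Y' \<subseteq> N <+>\<^bsub>M\<^esub> gen_submodule R M X2"
    and N: "N \<subseteq> carrier M" and X: "X1 \<union> X2 \<subseteq> carrier M"
  shows "Y \<subseteq> N <+>\<^bsub>M\<^esub> gen_submodule R M (X1 \<union> X2)"
proof
  have G: "submodule (gen_submodule R M (X1 \<union> X2)) R M" using submodule_gen_submodule[OF X] .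
  fix y assume "y \<in> Y"
  with Y obtain y' x1 where y': "y' \<in> Y'" and x1: "x1 \<in> gen_submodule R M X1"
    and y: "y = y' \<oplus>\<^bsub>M\<^esub> x1"
    by (blast elim: set_addE)
  with Y' obtain n x2 where n: "n \<in> N" and x2: "x2 \<in> gen_submodule R M X2"
    and y'_eq: "y' = n \<oplus>\<^bsub>M\<^esub> x2"
    by (blast elim: set_addE)
  have x12: "x1 \<in> gen_submodule R M (X1 \<union> X2)" "x2 \<in> gen_submodule R M (X1 \<union> X2)"
    using x1 x2 gen_submodule_mono[of X1 "X1 \<union> X2"] gen_submodule_mono[of X2 "X1 \<union> X2"] by blast+
  then have "x2 \<oplus>\<^bsub>M\<^esub> x1 \<in> gen_submodule R M (X1 \<union> X2)"
    using submodule_a_closed[OF G] by blast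
  moreover have "y = n \<oplus>\<^bsub>M\<^esub> (x2 \<oplus>\<^bsub>M\<^esub> x1)"
  proof -
    have "n \<in> carrier M" "x1 \<in> carrier M" "x2 \<in> carrier M"
      using n N x12 submoduleE(1)[OF G] by blast+
    then show ?thesis using y y'_eq by (simp add: M.a_assoc)
  qed
  ultimately show "y \<in> N <+>\<^bsub>M\<^esub> gen_submodule R M (X1 \<union> X2)"
    using n unfolding set_add_def' by blast
qed

lemma gen_submodule_insert:
  assumes S: "S \<subseteq> carrier M" and s: "s \<in> carrier M"
  shows "gen_submodule R M (insert s S) = gen_submodule R M S <+>\<^bsub>M\<^esub> (\<lambda>c. c \<odot>\<^bsub>M\<^esub> s) ` carrier R"
    (is "?G = ?K <+>\<^bsub>M\<^esub> ?Rs")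
proof
  have K: "submodule ?K R M" and Rs: "submodule ?Rs R M"
    using submodule_gen_submodule[OF S] submodule_cyclic[OF s] .
  have "s \<in> ?Rs" using s by (metis R.one_closed image_eqI smult_one)
  then have "s \<in> ?K <+>\<^bsub>M\<^esub> ?Rs"
    using set_add_subset_right[OF K submoduleE(1)[OF Rs]] by blast
  moreover have "S \<subseteq> ?K <+>\<^bsub>M\<^esub> ?Rs"
    using set_add_subset_left[OF submoduleE(1)[OF K] Rs] gen_submodule_incl[of S] by blast
  ultimately show "?G \<subseteq> ?K <+>\<^bsub>M\<^esub> ?Rs"
    using gen_submodule_minimal[OF submodule_set_add[OF K Rs]] by blast
next
  have G: "submodule ?G R M" using submodule_gen_submodule S s by simp
  have "?K \<subseteq> ?G" using gen_submodule_mono[of S "insert s S"] by blast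
  moreover have "?Rs \<subseteq> ?G"
    using gen_submodule_incl[of "insert s S"] submodule.smult_closed[OF G] by blast
  ultimately show "?K <+>\<^bsub>M\<^esub> ?Rs \<subseteq> ?G"
    using submodule_a_closed[OF G] unfolding set_add_def' by blast
qed

text \<open>Submodules of finitely generated modules are finitely generated: if \<open>V \<subseteq> K + R s\<close> with
  \<open>K\<close> finitely generated, then \<open>V \<inter> K\<close> is finitely generated by induction, and \<open>V\<close> is
  recovered from \<open>V \<inter> K\<close> together with lifts to \<open>V\<close> of finitely many generators of the
  ideal \<open>(V + K : s)\<close> of coefficients of \<open>s\<close>.\<close>

lemma ann_modulo_finite_lift:
  assumes noeth: "noetherian_ring R" and V: "submodule V R M" and K: "submodule K R M"
    and s: "s \<in> carrier M"
  shows "\<exists>T. finite T \<and> T \<subseteq> V \<and>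
    ann_modulo R M (V <+>\<^bsub>M\<^esub> K) s \<subseteq> ann_modulo R M (gen_submodule R M T <+>\<^bsub>M\<^esub> K) s"
proof -
  let ?J = "ann_modulo R M (V <+>\<^bsub>M\<^esub> K) s"
  obtain C where C: "C \<subseteq> carrier R" "finite C" "?J = Idl\<^bsub>R\<^esub> C"
    using noetherian_ring.finetely_gen[OF noeth ann_modulo_ideal[OF submodule_set_add[OF V K] s]]
    by blast
  have "\<forall>c \<in> C. \<exists>v \<in> V. \<exists>k \<in> K. c \<odot>\<^bsub>M\<^esub> s = v \<oplus>\<^bsub>M\<^esub> k"
    using C(3) R.genideal_self[OF C(1)] unfolding ann_modulo_def set_add_def' by blast
  then obtain lift where lift: "\<And>c. c \<in> C \<Longrightarrow> lift c \<in> V \<and> (\<exists>k \<in> K. c \<odot>\<^bsub>M\<^esub> s = lift c \<oplus>\<^bsub>M\<^esub> k)"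
    by metis
  let ?T = "lift ` C"
  have T: "?T \<subseteq> V" using lift by blast
  have GT: "submodule (gen_submodule R M ?T) R M"
    using submodule_gen_submodule[OF subset_trans[OF T submoduleE(1)[OF V]]] .
  have "C \<subseteq> ann_modulo R M (gen_submodule R M ?T <+>\<^bsub>M\<^esub> K) s"
  proof
    fix c assume c: "c \<in> C"
    then obtain k where "k \<in> K" "c \<odot>\<^bsub>M\<^esub> s = lift c \<oplus>\<^bsub>M\<^esub> k" using lift by blast
    moreover have "lift c \<in> gen_submodule R M ?T" using c gen_submodule_incl[of ?T] by blast
    ultimately have "c \<odot>\<^bsub>M\<^esub> s \<in> gen_submodule R M ?T <+>\<^bsub>M\<^esub> K"
      unfolding set_add_def' by blast
    then show "c \<in> ann_modulo R M (gen_submodule R M ?T <+>\<^bsub>M\<^esub> K) s"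
      using c C(1) unfolding ann_modulo_def by blast
  qed
  then have "?J \<subseteq> ann_modulo R M (gen_submodule R M ?T <+>\<^bsub>M\<^esub> K) s"
    using C(3) R.genideal_minimal[OF ann_modulo_ideal[OF submodule_set_add[OF GT K] s]] by simp
  then show ?thesis using T C(2) by blast
qed

lemma subset_Int_set_add_lift:
  assumes V: "submodule V R M" and K: "submodule K R M" and s: "s \<in> carrier M"
    and T: "T \<subseteq> V" and V_sub: "V \<subseteq> K <+>\<^bsub>M\<^esub> (\<lambda>c. c \<odot>\<^bsub>M\<^esub> s) ` carrier R"
    and lift: "ann_modulo R M (V <+>\<^bsub>M\<^esub> K) s \<subseteq> ann_modulo R M (gen_submodule R M T <+>\<^bsub>M\<^esub> K) s"
  shows "V \<subseteq> (V \<inter> K) <+>\<^bsub>M\<^esub> gen_submodule R M T"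
proof
  have K_carr: "K \<subseteq> carrier M" and V_carr: "V \<subseteq> carrier M"
    using submoduleE(1)[OF K] submoduleE(1)[OF V] .
  have GT: "gen_submodule R M T \<subseteq> V" using gen_submodule_minimal[OF V T] .
  fix v assume v: "v \<in> V"
  with V_sub obtain k c where k: "k \<in> K" and c: "c \<in> carrier R" and v_eq: "v = k \<oplus>\<^bsub>M\<^esub> c \<odot>\<^bsub>M\<^esub> s"
    by (blast elim: set_addE)
  have k_carr: "k \<in> carrier M" using k K_carr by blast
  have "c \<odot>\<^bsub>M\<^esub> s = v \<oplus>\<^bsub>M\<^esub> \<ominus>\<^bsub>M\<^esub> k"
    using v_eq k_carr c s by (simp add: M.a_ac M.r_neg1 M.r_neg2)
  then have "c \<in> ann_modulo R M (V <+>\<^bsub>M\<^esub> K) s"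
    using v submodule_a_inv_closed[OF K k] c unfolding ann_modulo_def set_add_def' by blast
  with lift obtain t k' where t: "t \<in> gen_submodule R M T" and k': "k' \<in> K"
    and cs_eq: "c \<odot>\<^bsub>M\<^esub> s = t \<oplus>\<^bsub>M\<^esub> k'"
    unfolding ann_modulo_def by (blast elim: set_addE)
  have t_carr: "t \<in> carrier M" and k'_carr: "k' \<in> carrier M"
    using t GT V_carr k' K_carr by blast+
  have "v \<ominus>\<^bsub>M\<^esub> t = k \<oplus>\<^bsub>M\<^esub> k'"
    using k_carr k'_carr t_carr v_eq cs_eq by (simp add: a_minus_def M.a_ac M.r_neg M.r_neg1)
  then have "v \<ominus>\<^bsub>M\<^esub> t \<in> V \<inter> K"
    using submodule_minus_closed[OF V v subsetD[OF GT t]] submodule_a_closed[OF K k k'] by simp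
  moreover have "v = (v \<ominus>\<^bsub>M\<^esub> t) \<oplus>\<^bsub>M\<^esub> t"
    using subsetD[OF V_carr v] t_carr by (simp add: a_minus_def M.a_assoc M.l_neg)
  ultimately show "v \<in> (V \<inter> K) <+>\<^bsub>M\<^esub> gen_submodule R M T"
    using t unfolding set_add_def' by blast
qed

lemma submodule_of_fg_is_fg:
  assumes noeth: "noetherian_ring R" and "finite S" "S \<subseteq> carrier M"
    and "submodule V R M" "V \<subseteq> gen_submodule R M S"
  shows "\<exists>S'. finite S' \<and> S' \<subseteq> V \<and> V = gen_submodule R M S'"
  using assms(2-5)
proof (induction S arbitrary: V rule: finite_induct)
  case empty
  then show ?case using gen_submodule_minimal[OF empty.prems(2)] by blast
next
  case (insert s S V)
  let ?K = "gen_submodule R M S"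
  have S: "S \<subseteq> carrier M" and s: "s \<in> carrier M" using insert.prems(1) by auto
  have K: "submodule ?K R M" using submodule_gen_submodule[OF S] .
  note V = insert.prems(2)
  obtain S1 where S1: "finite S1" "S1 \<subseteq> V \<inter> ?K" "V \<inter> ?K = gen_submodule R M S1"
    using insert.IH[OF S submodule_Int[OF V K]] by blast
  obtain T where T: "finite T" "T \<subseteq> V"
    and lift: "ann_modulo R M (V <+>\<^bsub>M\<^esub> ?K) s \<subseteq> ann_modulo R M (gen_submodule R M T <+>\<^bsub>M\<^esub> ?K) s"
    using ann_modulo_finite_lift[OF noeth V K s] by blast
  have "V \<subseteq> ?K <+>\<^bsub>M\<^esub> (\<lambda>c. c \<odot>\<^bsub>M\<^esub> s) ` carrier R"
    using insert.prems(3) gen_submodule_insert[OF S s] by simp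
  then have "V \<subseteq> (V \<inter> ?K) <+>\<^bsub>M\<^esub> gen_submodule R M T"
    using subset_Int_set_add_lift[OF V K s T(2) _ lift] by blast
  also have "\<dots> = gen_submodule R M S1 <+>\<^bsub>M\<^esub> gen_submodule R M T"
    using S1(3) by simp
  also have "\<dots> \<subseteq> gen_submodule R M (S1 \<union> T)"
  proof -
    have "S1 \<union> T \<subseteq> carrier M" using S1(2) T(2) submoduleE(1)[OF V] by blast
    then show ?thesis
      using submodule_a_closed[OF submodule_gen_submodule] gen_submodule_mono[of S1 "S1 \<union> T"]
        gen_submodule_mono[of T "S1 \<union> T"] unfolding set_add_def' by blast
  qed
  finally have "V \<subseteq> gen_submodule R M (S1 \<union> T)" .
  moreover have S'V: "S1 \<union> T \<subseteq> V" using S1(2) T(2) by blast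
  ultimately have "V = gen_submodule R M (S1 \<union> T)"
    using gen_submodule_minimal[OF V S'V] by blast
  moreover have "finite (S1 \<union> T)" using S1(1) T(1) by blast
  ultimately show ?case using S'V by blast
qed

lemma fg_modulo_ann_single:
  assumes noeth: "noetherian_ring R" and S: "finite S" "S \<subseteq> carrier M"
    and a: "a \<in> carrier R" and Y: "submodule Y R M"
    and aY: "(\<lambda>y. a \<odot>\<^bsub>M\<^esub> y) ` Y \<subseteq> gen_submodule R M S"
  shows "\<exists>X. finite X \<and> X \<subseteq> Y \<and>
    Y \<subseteq> (Y \<inter> submodule_colon R M {\<zero>\<^bsub>M\<^esub>} {a}) <+>\<^bsub>M\<^esub> gen_submodule R M X"
proof -
  have Y_carr: "Y \<subseteq> carrier M" using submoduleE(1)[OF Y] .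
  obtain Z where Z: "finite Z" "Z \<subseteq> (\<lambda>y. a \<odot>\<^bsub>M\<^esub> y) ` Y" "(\<lambda>y. a \<odot>\<^bsub>M\<^esub> y) ` Y = gen_submodule R M Z"
    using submodule_of_fg_is_fg[OF noeth S submodule_image_smult[OF a Y] aY] by blast
  obtain X where X: "X \<subseteq> Y" "finite X" "Z = (\<lambda>y. a \<odot>\<^bsub>M\<^esub> y) ` X"
    using finite_subset_image[OF Z(1,2)] by blast
  have GX: "submodule (gen_submodule R M X) R M" "gen_submodule R M X \<subseteq> Y"
    using submodule_gen_submodule[OF subset_trans[OF X(1) Y_carr]] gen_submodule_minimal[OF Y X(1)] .
  have "y \<in> (Y \<inter> submodule_colon R M {\<zero>\<^bsub>M\<^esub>} {a}) <+>\<^bsub>M\<^esub> gen_submodule R M X" if y: "y \<in> Y" for y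
  proof -
    have "a \<odot>\<^bsub>M\<^esub> y \<in> (\<lambda>z. a \<odot>\<^bsub>M\<^esub> z) ` gen_submodule R M X"
      using y Z(3) X(3) gen_submodule_minimal[OF submodule_image_smult[OF a GX(1)]]
        gen_submodule_incl[of X] by blast
    then obtain z where z: "z \<in> gen_submodule R M X" "a \<odot>\<^bsub>M\<^esub> y = a \<odot>\<^bsub>M\<^esub> z" by blast
    have y_carr: "y \<in> carrier M" and z_carr: "z \<in> carrier M"
      using y z(1) GX(2) Y_carr by blast+
    have "a \<odot>\<^bsub>M\<^esub> (y \<ominus>\<^bsub>M\<^esub> z) = \<zero>\<^bsub>M\<^esub>"
      using z(2) a y_carr z_carr by (simp add: a_minus_def smult_r_distr smult_r_minus M.r_neg)
    then have "y \<ominus>\<^bsub>M\<^esub> z \<in> Y \<inter> submodule_colon R M {\<zero>\<^bsub>M\<^esub>} {a}"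
      using submodule_minus_closed[OF Y y] z(1) GX(2) y_carr z_carr by (auto simp: submodule_colon_def)
    moreover have "y = (y \<ominus>\<^bsub>M\<^esub> z) \<oplus>\<^bsub>M\<^esub> z"
      using y_carr z_carr by (simp add: a_minus_def M.a_assoc M.l_neg)
    ultimately show ?thesis using z(1) unfolding set_add_def' by blast
  qed
  then show ?thesis using X(1,2) by blast
qed

lemma fg_modulo_annihilator:
  assumes noeth: "noetherian_ring R" and S: "finite S" "S \<subseteq> carrier M"
    and "finite A" "A \<subseteq> carrier R" "submodule Y R M"
    and "Y \<subseteq> submodule_colon R M (gen_submodule R M S) A"
  shows "\<exists>X. finite X \<and> X \<subseteq> Y \<and>
    Y \<subseteq> (Y \<inter> submodule_colon R M {\<zero>\<^bsub>M\<^esub>} A) <+>\<^bsub>M\<^esub> gen_submodule R M X"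
  using assms(4-7)
proof (induction A arbitrary: Y rule: finite_induct)
  case empty
  have "Y \<subseteq> Y <+>\<^bsub>M\<^esub> gen_submodule R M {}"
    using set_add_subset_left[OF submoduleE(1)[OF empty.prems(2)] submodule_gen_submodule] by blast
  moreover have "Y \<inter> submodule_colon R M {\<zero>\<^bsub>M\<^esub>} {} = Y"
    using submoduleE(1)[OF empty.prems(2)] by (auto simp: submodule_colon_def)
  ultimately show ?case by auto
next
  case (insert a A Y)
  note Y = insert.prems(2)
  let ?Y' = "Y \<inter> submodule_colon R M {\<zero>\<^bsub>M\<^esub>} {a}"
  have a: "a \<in> carrier R" and A: "A \<subseteq> carrier R" using insert.prems(1) by auto
  have Y': "submodule ?Y' R M"
    using submodule_Int[OF Y submodule_submodule_colon[OF submodule_zero]] a by blast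
  obtain X1 where X1: "finite X1" "X1 \<subseteq> Y" and Y_split: "Y \<subseteq> ?Y' <+>\<^bsub>M\<^esub> gen_submodule R M X1"
    using fg_modulo_ann_single[OF noeth S a Y] insert.prems(3) by (auto simp: submodule_colon_def)
  let ?N = "Y \<inter> submodule_colon R M {\<zero>\<^bsub>M\<^esub>} (insert a A)"
  have N_eq: "?Y' \<inter> submodule_colon R M {\<zero>\<^bsub>M\<^esub>} A = ?N"
    by (auto simp: submodule_colon_def)
  have "?Y' \<subseteq> submodule_colon R M (gen_submodule R M S) A"
    using insert.prems(3) by (auto simp: submodule_colon_def)
  then obtain X2 where X2: "finite X2" "X2 \<subseteq> ?Y'"
    and Y'_split: "?Y' \<subseteq> ?N <+>\<^bsub>M\<^esub> gen_submodule R M X2"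
    using insert.IH[OF A Y'] unfolding N_eq by blast
  have X_carr: "X1 \<union> X2 \<subseteq> carrier M" using X1(2) X2(2) submoduleE(1)[OF Y] by blast
  have "Y \<subseteq> ?N <+>\<^bsub>M\<^esub> gen_submodule R M (X1 \<union> X2)"
    using set_add_gen_submodule_trans[OF Y_split Y'_split] X_carr submoduleE(1)[OF Y] by blast
  then show ?case using X1 X2 by blast
qed

lemma finite_subquot_Ass_fg:
  assumes noeth: "noetherian_ring R" and U: "submodule U R M"
    and "finite X" "X \<subseteq> carrier M"
  shows "finite (subquot_Ass R M U (gen_submodule R M (U \<union> X)))"
  using assms(3,4)
proof (induction X rule: finite_induct)
  case empty
  then show ?case using gen_submodule_idem[OF U] subquot_Ass_self[OF U] by simp
next
  case (insert s X)
  let ?W = "gen_submodule R M (U \<union> X)"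
  have X: "U \<union> X \<subseteq> carrier M" and s: "s \<in> carrier M"
    using insert.prems submoduleE(1)[OF U] by auto
  have W: "submodule ?W R M" using submodule_gen_submodule[OF X] .
  let ?W' = "?W <+>\<^bsub>M\<^esub> (\<lambda>c. c \<odot>\<^bsub>M\<^esub> s) ` carrier R"
  have "U \<subseteq> ?W" using gen_submodule_incl[of "U \<union> X"] by blast
  moreover have "?W' \<subseteq> carrier M"
    using submoduleE(1)[OF submodule_set_add[OF W submodule_cyclic[OF s]]] .
  ultimately have "subquot_Ass R M U ?W' \<subseteq> subquot_Ass R M U ?W \<union> subquot_Ass R M ?W ?W'"
    by (rule subquot_Ass_subset_Un[OF U W])
  also have "\<dots> \<subseteq> subquot_Ass R M U ?W \<union> ring_Ass R (ann_modulo R M ?W s)"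
    using subquot_Ass_cyclic[OF W s] by blast
  finally have "subquot_Ass R M U (gen_submodule R M (U \<union> insert s X))
      \<subseteq> subquot_Ass R M U ?W \<union> ring_Ass R (ann_modulo R M ?W s)"
    using gen_submodule_insert[OF X s] by simp
  moreover have "finite (ring_Ass R (ann_modulo R M ?W s))"
    using finite_ring_Ass[OF noeth ann_modulo_ideal[OF W s]] .
  moreover have "finite (subquot_Ass R M U ?W)"
    using insert.IH insert.prems by simp
  ultimately show ?case by (meson finite_UnI finite_subset)
qed

end

section \<open>Finitely weakly Laskerian modules\<close>

context module_record
begin

lemma quotient_module_smult_coset:
  assumes K: "submodule K R M" and x: "x \<in> carrier M" and r: "r \<in> carrier R"
  shows "smult (quotient_module R M K) r (K +>\<^bsub>M\<^esub> x) = K +>\<^bsub>M\<^esub> (r \<odot>\<^bsub>M\<^esub> x)"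
proof -
  have K_carr: "K \<subseteq> carrier M" using submoduleE(1)[OF K] .
  have "K <+>\<^bsub>M\<^esub> ((\<lambda>y. r \<odot>\<^bsub>M\<^esub> y) ` (K +>\<^bsub>M\<^esub> x)) = K +>\<^bsub>M\<^esub> (r \<odot>\<^bsub>M\<^esub> x)"
  proof (intro equalityI subsetI)
    fix z assume "z \<in> K <+>\<^bsub>M\<^esub> ((\<lambda>y. r \<odot>\<^bsub>M\<^esub> y) ` (K +>\<^bsub>M\<^esub> x))"
    then obtain k1 k2 where k: "k1 \<in> K" "k2 \<in> K" and z: "z = k1 \<oplus>\<^bsub>M\<^esub> r \<odot>\<^bsub>M\<^esub> (k2 \<oplus>\<^bsub>M\<^esub> x)"
      unfolding set_add_def' a_r_coset_def' by blast
    have "z = (k1 \<oplus>\<^bsub>M\<^esub> r \<odot>\<^bsub>M\<^esub> k2) \<oplus>\<^bsub>M\<^esub> r \<odot>\<^bsub>M\<^esub> x"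
      using z subsetD[OF K_carr k(1)] subsetD[OF K_carr k(2)] x r by (simp add: smult_r_distr M.a_assoc)
    moreover have "k1 \<oplus>\<^bsub>M\<^esub> r \<odot>\<^bsub>M\<^esub> k2 \<in> K"
      using submodule_a_closed[OF K k(1) submodule.smult_closed[OF K r k(2)]] .
    ultimately show "z \<in> K +>\<^bsub>M\<^esub> (r \<odot>\<^bsub>M\<^esub> x)" unfolding a_r_coset_def' by blast
  next
    fix z assume "z \<in> K +>\<^bsub>M\<^esub> (r \<odot>\<^bsub>M\<^esub> x)"
    then obtain k where k: "k \<in> K" and z: "z = k \<oplus>\<^bsub>M\<^esub> r \<odot>\<^bsub>M\<^esub> x"
      unfolding a_r_coset_def' by blast
    then show "z \<in> K <+>\<^bsub>M\<^esub> ((\<lambda>y. r \<odot>\<^bsub>M\<^esub> y) ` (K +>\<^bsub>M\<^esub> x))"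
      using abelian_subgroup.a_rcos_self[OF submodule_abelian_subgroup[OF K] x]
      unfolding set_add_def' by blast
  qed
  then show ?thesis unfolding quotient_module_def by simp
qed

lemma Ass_quotient_module:
  assumes K: "submodule K R M"
  shows "Ass R (quotient_module R M K) = subquot_Ass R M K (carrier M)"
proof -
  have ann: "ann_elem R (quotient_module R M K) (K +>\<^bsub>M\<^esub> x) = ann_modulo R M K x"
    if x: "x \<in> carrier M" for x
  proof -
    have "r \<odot>\<^bsub>quotient_module R M K\<^esub> (K +>\<^bsub>M\<^esub> x) = \<zero>\<^bsub>quotient_module R M K\<^esub> \<longleftrightarrow> r \<odot>\<^bsub>M\<^esub> x \<in> K"
      if r: "r \<in> carrier R" for r
      using quotient_module_smult_coset[OF K x r] coset_eq_submodule_iff[OF K smult_closed[OF r x]]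
      by (simp add: quotient_module_def)
    then show ?thesis unfolding ann_elem_def ann_modulo_def by blast
  qed
  have "carrier (quotient_module R M K) = (\<lambda>x. K +>\<^bsub>M\<^esub> x) ` carrier M"
    unfolding quotient_module_def A_RCOSETS_def' by auto
  then show ?thesis unfolding Ass_def subquot_Ass_def using ann by auto
qed

lemma submodule_restrict_iff:
  assumes N: "submodule N R M"
  shows "submodule X R (M\<lparr>carrier := N\<rparr>) \<longleftrightarrow> submodule X R M \<and> X \<subseteq> N"
proof -
  interpret MN: module R "M\<lparr>carrier := N\<rparr>"
    using submodule.submodule_is_module[OF N module_axioms] .
  show ?thesis
  proof
    assume X: "submodule X R (M\<lparr>carrier := N\<rparr>)"
    then have "X \<subseteq> N" using MN.submoduleE(1) by simp
    moreover have "module R (M\<lparr>carrier := X\<rparr>)"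
      using submodule.submodule_is_module[OF X MN.module_axioms] by simp
    ultimately show "submodule X R M \<and> X \<subseteq> N"
      using module_incl_imp_submodule submoduleE(1)[OF N] by blast
  next
    assume X: "submodule X R M \<and> X \<subseteq> N"
    then have "module R ((M\<lparr>carrier := N\<rparr>)\<lparr>carrier := X\<rparr>)"
      using submodule.submodule_is_module[OF _ module_axioms] by simp
    then show "submodule X R (M\<lparr>carrier := N\<rparr>)"
      using MN.module_incl_imp_submodule X by simp
  qed
qed

lemma gen_submodule_restrict:
  assumes N: "submodule N R M" and S: "S \<subseteq> N"
  shows "gen_submodule R (M\<lparr>carrier := N\<rparr>) S = gen_submodule R M S"
proof -
  have "gen_submodule R M S \<subseteq> N" using gen_submodule_minimal[OF N S] .
  moreover have "submodule (gen_submodule R M S) R M"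
    using submodule_gen_submodule S submoduleE(1)[OF N] by blast
  ultimately show ?thesis
    using gen_submodule_incl[of S] submodule_restrict_iff[OF N]
    unfolding gen_submodule_def[of R "M\<lparr>carrier := N\<rparr>"] gen_submodule_def[of R M] by blast
qed

lemma finite_subquot_Ass_of_fin_weakly_laskerian:
  assumes noeth: "noetherian_ring R" and N: "submodule N R M"
    and fwl: "fin_weakly_laskerian R (M\<lparr>carrier := N\<rparr>)"
    and S: "finite S" "S \<subseteq> carrier M"
  shows "finite (subquot_Ass R M (gen_submodule R M S) N)"
proof -
  let ?K = "gen_submodule R M S"
  have KN: "submodule (?K \<inter> N) R M"
    using submodule_Int[OF submodule_gen_submodule[OF S(2)] N] .
  obtain S' where S': "finite S'" "S' \<subseteq> ?K \<inter> N" "?K \<inter> N = gen_submodule R M S'"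
    using submodule_of_fg_is_fg[OF noeth S KN Int_lower1] by blast
  have "?K \<inter> N = gen_submodule R (M\<lparr>carrier := N\<rparr>) S'"
    using S'(2,3) gen_submodule_restrict[OF N, of S'] by blast
  then have "fg_submodule R (M\<lparr>carrier := N\<rparr>) (?K \<inter> N)"
    unfolding fg_submodule_def using S'(1,2) by auto
  then have fin: "finite (Ass R (quotient_module R (M\<lparr>carrier := N\<rparr>) (?K \<inter> N)))"
    using fwl unfolding fin_weakly_laskerian_def by blast
  interpret MN: module_record R "M\<lparr>carrier := N\<rparr>"
    using submodule.submodule_is_module[OF N module_axioms] by (simp add: module_record_def)
  have "Ass R (quotient_module R (M\<lparr>carrier := N\<rparr>) (?K \<inter> N)) = subquot_Ass R M (?K \<inter> N) N"
    using MN.Ass_quotient_module submodule_restrict_iff[OF N] KN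
    by (simp add: subquot_Ass_def ann_modulo_def)
  moreover have "subquot_Ass R M ?K N \<subseteq> subquot_Ass R M (?K \<inter> N) N"
  proof -
    have "ann_modulo R M ?K n = ann_modulo R M (?K \<inter> N) n" if "n \<in> N" for n
      using submodule.smult_closed[OF N _ that] by (auto simp: ann_modulo_def)
    then show ?thesis unfolding subquot_Ass_def by auto
  qed
  ultimately show ?thesis using fin finite_subset by metis
qed

end

section \<open>Torsion modules\<close>

context cring
begin

lemma ideal_pow_ideal: "ideal I R \<Longrightarrow> ideal (ideal_pow R I n) R"
  by (induction n) (auto simp: ideal_pow_def ideals_set_def oneideal ideal_prod_is_ideal)

lemma ideal_pow_subset_primeideal:
  assumes I: "ideal I R" and P: "primeideal P R" and "ideal_pow R I n \<subseteq> P"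
  shows "I \<subseteq> P"
  using assms(3)
proof (induction n)
  case 0
  then have "carrier R \<subseteq> P" by (simp add: ideal_pow_def ideals_set_def)
  then show ?case using primeideal.I_notcarr[OF P] ideal.Icarr[OF primeideal.axioms(1)[OF P]] by blast
next
  case (Suc n)
  then have "ideal_pow R I n \<cdot> I \<subseteq> P" by (simp add: ideal_pow_def ideals_set_def)
  then show ?case using primeideal_divides_ideal_prod[OF P ideal_pow_ideal[OF I] I] Suc.IH by blast
qed

end

context module_record
begin

lemma submodule_ann_submodule: "I \<subseteq> carrier R \<Longrightarrow> submodule (ann_submodule R M I) R M"
  using submodule_submodule_colon[OF submodule_zero]
  by (simp add: ann_submodule_def submodule_colon_def)

lemma subquot_Ass_torsion:
  assumes I: "ideal I R" and tors: "torsion R M I = carrier M" and K: "submodule K R M"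
  shows "subquot_Ass R M K (carrier M) \<subseteq> subquot_Ass R M K (submodule_colon R M K I)"
proof
  fix P assume "P \<in> subquot_Ass R M K (carrier M)"
  then obtain x where P: "primeideal P R" "P = ann_modulo R M K x" and x: "x \<in> carrier M"
    unfolding subquot_Ass_def by blast
  obtain n where n: "\<forall>r \<in> ideal_pow R I n. r \<odot>\<^bsub>M\<^esub> x = \<zero>\<^bsub>M\<^esub>"
    using x tors unfolding torsion_def by blast
  have "ideal_pow R I n \<subseteq> P"
    using n P(2) submodule_zero_closed[OF K] ideal.Icarr[OF R.ideal_pow_ideal[OF I]]
    by (auto simp: ann_modulo_def)
  then have "I \<subseteq> P" using R.ideal_pow_subset_primeideal[OF I P(1)] by blast
  then have "x \<in> submodule_colon R M K I"
    using x P(2) by (auto simp: submodule_colon_def ann_modulo_def)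
  then show "P \<in> subquot_Ass R M K (submodule_colon R M K I)"
    using P unfolding subquot_Ass_def by blast
qed

lemma submodule_colon_subset_gen:
  assumes noeth: "noetherian_ring R" and I: "ideal I R" and S: "finite S" "S \<subseteq> carrier M"
  shows "\<exists>X. finite X \<and> X \<subseteq> carrier M \<and>
    submodule_colon R M (gen_submodule R M S) I \<subseteq> gen_submodule R M (ann_submodule R M I \<union> X)"
proof -
  let ?L = "submodule_colon R M (gen_submodule R M S) I"
  have I_carr: "I \<subseteq> carrier R" using ideal.Icarr[OF I] by blast
  obtain A where A: "A \<subseteq> carrier R" "finite A" "I = Idl\<^bsub>R\<^esub> A"
    using noetherian_ring.finetely_gen[OF noeth I] by blast
  have L: "submodule ?L R M"
    using submodule_submodule_colon[OF submodule_gen_submodule[OF S(2)] I_carr] .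
  have "?L \<subseteq> submodule_colon R M (gen_submodule R M S) A"
    using A(3) R.genideal_self[OF A(1)] by (auto simp: submodule_colon_def)
  then obtain X where X: "finite X" "X \<subseteq> ?L"
    and L_split: "?L \<subseteq> (?L \<inter> submodule_colon R M {\<zero>\<^bsub>M\<^esub>} A) <+>\<^bsub>M\<^esub> gen_submodule R M X"
    using fg_modulo_annihilator[OF noeth S A(2,1) L] by blast
  have X_carr: "X \<subseteq> carrier M" using X(2) by (auto simp: submodule_colon_def)
  have "ann_submodule R M I = submodule_colon R M {\<zero>\<^bsub>M\<^esub>} A"
    using A(3) submodule_colon_zero_genideal[OF A(1)]
    by (simp add: ann_submodule_def submodule_colon_def)
  then have "?L \<inter> submodule_colon R M {\<zero>\<^bsub>M\<^esub>} A \<subseteq> ann_submodule R M I" by blast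
  then have "?L \<subseteq> ann_submodule R M I <+>\<^bsub>M\<^esub> gen_submodule R M X"
    using L_split unfolding set_add_def' by (meson UN_mono order_refl subset_trans)
  also have "\<dots> \<subseteq> gen_submodule R M (ann_submodule R M I \<union> X)"
    using set_add_subset_gen_submodule_Un X_carr by (simp add: ann_submodule_def)
  finally show ?thesis using X(1) X_carr by blast
qed

lemma finite_Ass_quotient_of_torsion:
  assumes noeth: "noetherian_ring R" and I: "ideal I R" and tors: "torsion R M I = carrier M"
    and fwl: "fin_weakly_laskerian R (M\<lparr>carrier := ann_submodule R M I\<rparr>)"
    and K_fg: "fg_submodule R M K"
  shows "finite (Ass R (quotient_module R M K))"
proof -
  obtain S where S: "finite S" "S \<subseteq> carrier M" and K_def: "K = gen_submodule R M S"
    using K_fg unfolding fg_submodule_def by blast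
  let ?N = "ann_submodule R M I"
  have K: "submodule K R M" using submodule_gen_submodule[OF S(2)] K_def by simp
  have N: "submodule ?N R M" using submodule_ann_submodule ideal.Icarr[OF I] by blast
  obtain X where X: "finite X" "X \<subseteq> carrier M"
    and L: "submodule_colon R M K I \<subseteq> gen_submodule R M (?N \<union> X)"
    using submodule_colon_subset_gen[OF noeth I S] K_def by blast
  let ?U = "K <+>\<^bsub>M\<^esub> ?N"
  let ?W = "gen_submodule R M (?U \<union> X)"
  have U: "submodule ?U R M" using submodule_set_add[OF K N] .
  have "?U \<union> X \<subseteq> carrier M" using submoduleE(1)[OF U] X(2) by blast
  then have W_carr: "?W \<subseteq> carrier M" using submoduleE(1)[OF submodule_gen_submodule] by blast
  have "?N \<union> X \<subseteq> ?U \<union> X" using set_add_subset_right[OF K submoduleE(1)[OF N]] by blast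
  then have colon_W: "submodule_colon R M K I \<subseteq> ?W"
    using L gen_submodule_mono by blast
  have "Ass R (quotient_module R M K) = subquot_Ass R M K (carrier M)"
    by (rule Ass_quotient_module[OF K])
  also have "\<dots> \<subseteq> subquot_Ass R M K (submodule_colon R M K I)"
    by (rule subquot_Ass_torsion[OF I tors K])
  also have "\<dots> \<subseteq> subquot_Ass R M K ?W"
    by (rule subquot_Ass_mono[OF colon_W])
  also have "\<dots> \<subseteq> subquot_Ass R M K ?U \<union> subquot_Ass R M ?U ?W"
    by (rule subquot_Ass_subset_Un[OF K U set_add_subset_left[OF submoduleE(1)[OF K] N] W_carr])
  also have "\<dots> \<subseteq> subquot_Ass R M K ?N \<union> subquot_Ass R M ?U ?W"
    using subquot_Ass_set_add[OF K submoduleE(1)[OF N]] by blast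
  finally show ?thesis
    using finite_subquot_Ass_of_fin_weakly_laskerian[OF noeth N fwl S] finite_subquot_Ass_fg[OF noeth U X]
    unfolding K_def by (meson finite_UnI finite_subset)
qed

end

theorem proposition3p14:
  fixes R :: "('a, 'c) ring_scheme" and I :: "'a set"
  assumes "cring R" and "noetherian_ring R" and "ideal I R"
  shows "condition_C R I (fin_weakly_laskerian R :: ('a, 'b) module \<Rightarrow> bool)"
  unfolding condition_C_def
proof (intro allI impI)
  fix M :: "('a, 'b) module"
  assume "module R M" "torsion R M I = carrier M"
    and "fin_weakly_laskerian R (M\<lparr>carrier := ann_submodule R M I\<rparr>)"
  then show "fin_weakly_laskerian R M"
    using module_record.finite_Ass_quotient_of_torsion[of R M] assms(2,3)
    unfolding fin_weakly_laskerian_def module_record_def by blast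
qed

end
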